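(* Let $T$ be a tree such that the longest $2$-path in $T$ has length $d\ge1$, and let $k$ be a positive integer. Then there exists $L>0$ (depending only on $k$ and $d$) such that the following holds: if $T$ contains a $\mathrm{C}$-gadget of order $d$ and length $L$, then there exists $1\le d'\le d$ such that $T$ contains a strong $\mathrm{C}$-gadget of order $d'$ with at least $k$ junctions.
   Context: In a tree $T$: a $2$-path of length $a$ is a path $x_0,\dots,x_a$ with $\deg(x_0)\ne2$, $\deg(x_1)=\dots=\deg(x_{a-1})=2$, $\deg(x_a)\ne 2$. A source is a vertex of degree $>2$. A ray of length $a$ is a $2$-path $x_0,\dots,x_a$ with $\deg(x_0)>2$ and $\deg(x_a)=1$; $x_0$ is its source. A $\mathrm{C}$-gadget of order $d$ and length $k$ is a path $x_0,\dots,x_k$ in $T$ such that each inner vertex $x_i$ either has degree $2$ or is a source such that every neighbour of $x_i$ other than $x_{i-1},x_{i+1}$ is contained in a ray of length at most $d$ from $x_i$ to a leaf. A $\mathrm{C}$-gadget $x_0,\dots,x_L$ of order $d$ is a strong $\mathrm{C}$-gadget with $k$ junctions if there are integers $0=i_0<i_1<\dots<i_k<i_{k+1}=L$ such that (I) $i_{j+1}-i_j>2d$ for all $j\in\{0,\dots,k\}$, and (II) for all $j\in\{1,\dots,k\}$, $x_{i_j}$ is the source of a ray of length $d$ containing neither $x_{i_j-1}$ nor $x_{i_j+1}$; the vertices $x_{i_1},\dots,x_{i_k}$ are the junctions. *)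

theory Defs
  imports Main
begin

text \<open>A path is a nonempty list of distinct vertices, consecutive ones adjacent;
  a path x_0,...,x_a is a list of length a+1.\<close>

definition is_path :: "nat set \<Rightarrow> (nat \<Rightarrow> nat \<Rightarrow> bool) \<Rightarrow> nat list \<Rightarrow> bool" where
  "is_path V E xs \<longleftrightarrow> xs \<noteq> [] \<and> distinct xs \<and> set xs \<subseteq> V \<and>
     (\<forall>i. Suc i < length xs \<longrightarrow> E (xs ! i) (xs ! Suc i))"

definition is_tree :: "nat set \<Rightarrow> (nat \<Rightarrow> nat \<Rightarrow> bool) \<Rightarrow> bool" where
  "is_tree V E \<longleftrightarrow> finite V \<and> V \<noteq> {} \<and>
     (\<forall>x y. E x y \<longrightarrow> x \<in> V \<and> y \<in> V) \<and>
     (\<forall>x y. E x y \<longrightarrow> E y x) \<and> (\<forall>x. \<not> E x x) \<and>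
     (\<forall>x\<in>V. \<forall>y\<in>V. \<exists>xs. is_path V E xs \<and> hd xs = x \<and> last xs = y) \<and>
     \<not> (\<exists>xs. is_path V E xs \<and> length xs \<ge> 3 \<and> E (last xs) (hd xs))"

definition deg :: "nat set \<Rightarrow> (nat \<Rightarrow> nat \<Rightarrow> bool) \<Rightarrow> nat \<Rightarrow> nat" where
  "deg V E x = card {y \<in> V. E x y}"

definition two_path :: "nat set \<Rightarrow> (nat \<Rightarrow> nat \<Rightarrow> bool) \<Rightarrow> nat list \<Rightarrow> nat \<Rightarrow> bool" where
  "two_path V E xs a \<longleftrightarrow> is_path V E xs \<and> length xs = a + 1 \<and> a \<ge> 1 \<and>
     deg V E (xs ! 0) \<noteq> 2 \<and> deg V E (xs ! a) \<noteq> 2 \<and>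
     (\<forall>i. 0 < i \<and> i < a \<longrightarrow> deg V E (xs ! i) = 2)"

definition ray :: "nat set \<Rightarrow> (nat \<Rightarrow> nat \<Rightarrow> bool) \<Rightarrow> nat list \<Rightarrow> nat \<Rightarrow> bool" where
  "ray V E xs a \<longleftrightarrow> two_path V E xs a \<and> deg V E (xs ! 0) > 2 \<and> deg V E (xs ! a) = 1"

definition longest_two_path :: "nat set \<Rightarrow> (nat \<Rightarrow> nat \<Rightarrow> bool) \<Rightarrow> nat \<Rightarrow> bool" where
  "longest_two_path V E d \<longleftrightarrow> (\<exists>xs. two_path V E xs d) \<and> (\<forall>xs a. two_path V E xs a \<longrightarrow> a \<le> d)"

definition C_gadget :: "nat set \<Rightarrow> (nat \<Rightarrow> nat \<Rightarrow> bool) \<Rightarrow> nat \<Rightarrow> nat \<Rightarrow> nat list \<Rightarrow> bool" where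
  "C_gadget V E d k xs \<longleftrightarrow> is_path V E xs \<and> length xs = k + 1 \<and>
     (\<forall>i. 0 < i \<and> i < k \<longrightarrow>
        deg V E (xs ! i) = 2 \<or>
        (deg V E (xs ! i) > 2 \<and>
         (\<forall>y. E (xs ! i) y \<and> y \<noteq> xs ! (i - 1) \<and> y \<noteq> xs ! (i + 1) \<longrightarrow>
            (\<exists>r a. ray V E r a \<and> a \<le> d \<and> r ! 0 = xs ! i \<and> y \<in> set r))))"

text \<open>Strong C-gadget of order d with k junctions; idx j plays the role of i_j.\<close>
definition strong_C_gadget :: "nat set \<Rightarrow> (nat \<Rightarrow> nat \<Rightarrow> bool) \<Rightarrow> nat \<Rightarrow> nat \<Rightarrow> nat list \<Rightarrow> bool" where
  "strong_C_gadget V E d k xs \<longleftrightarrow> (\<exists>L. C_gadget V E d L xs \<and>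
     (\<exists>idx :: nat \<Rightarrow> nat. idx 0 = 0 \<and> idx (k + 1) = L \<and>
        (\<forall>j \<le> k. idx j + 2 * d < idx (Suc j)) \<and>
        (\<forall>j. 1 \<le> j \<and> j \<le> k \<longrightarrow>
           (\<exists>r. ray V E r d \<and> r ! 0 = xs ! idx j \<and>
                xs ! (idx j - 1) \<notin> set r \<and> xs ! (idx j + 1) \<notin> set r))))"

end

theory Submission
  imports Defs
begin

text \<open>Give each inner vertex x_i of a C-gadget of order d its side-ray order: the least e such
  that every side neighbour of x_i lies on a ray of length at most e from x_i. It is at most d,
  it is 0 exactly at vertices of degree 2, and a positive order e comes with a side ray of length
  exactly e. Since no 2-path is longer than d, the orders have no run of d consecutive zeros.
  A pigeonhole induction on the largest order then finds, in a long enough window, a value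
  e \<ge> 1 and k + 2 positions more than 2e apart whose k inner ones have order e, with all orders
  between the outer two at most e. The segment between the outer two is a strong C-gadget of
  order e with these k junctions.\<close>

lemma is_path_take: "is_path V E ys \<Longrightarrow> 0 < n \<Longrightarrow> is_path V E (take n ys)"
  unfolding is_path_def by (auto dest: in_set_takeD)

lemma is_path_drop: "is_path V E ys \<Longrightarrow> n < length ys \<Longrightarrow> is_path V E (drop n ys)"
  unfolding is_path_def by (auto dest: in_set_dropD)

lemma is_path_rev:
  assumes sym: "symp E" and p: "is_path V E ys"
  shows "is_path V E (rev ys)"
  unfolding is_path_def
proof (intro conjI allI impI)
  fix i assume i: "Suc i < length (rev ys)"
  then have "E (ys ! (length ys - Suc (Suc i))) (ys ! Suc (length ys - Suc (Suc i)))"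
    using p unfolding is_path_def by auto
  moreover have "Suc (length ys - Suc (Suc i)) = length ys - Suc i" using i by auto
  ultimately show "E (rev ys ! i) (rev ys ! Suc i)" using i sym by (auto simp: rev_nth dest: sympD)
qed (use p in \<open>auto simp: is_path_def\<close>)

lemma tree_symp: "is_tree V E \<Longrightarrow> symp E"
  unfolding is_tree_def by (blast intro: sympI)

lemma tree_sym: "is_tree V E \<Longrightarrow> E x y \<Longrightarrow> E y x"
  unfolding is_tree_def by blast

lemma tree_irrefl: "is_tree V E \<Longrightarrow> \<not> E x x"
  unfolding is_tree_def by blast

lemma tree_edge_in_V: "is_tree V E \<Longrightarrow> E x y \<Longrightarrow> x \<in> V \<and> y \<in> V"
  unfolding is_tree_def by blast

lemma path_neighbours:
  assumes "is_tree V E" "is_path V E xs" "0 < i" "i < length xs - 1"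
  shows "E (xs ! i) (xs ! (i - 1)) \<and> E (xs ! i) (xs ! (i + 1)) \<and> xs ! (i - 1) \<noteq> xs ! (i + 1)"
proof -
  obtain i' where i': "i = Suc i'" using assms(3) by (cases i) auto
  have "E (xs ! (i - 1)) (xs ! i)" "E (xs ! i) (xs ! (i + 1))"
    using assms(2-4) i' unfolding is_path_def by auto
  moreover have "xs ! (i - 1) \<noteq> xs ! (i + 1)"
    using assms(2-4) unfolding is_path_def by (simp add: nth_eq_iff_index_eq)
  ultimately show ?thesis using tree_sym[OF assms(1)] by blast
qed

lemma tree_path_neighbour_of_hd:
  assumes t: "is_tree V E" and p: "is_path V E r" and j: "j < length r" and e: "E (r ! 0) (r ! j)"
  shows "j = 1"
proof (rule ccontr)
  assume "j \<noteq> 1"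
  moreover have "j \<noteq> 0" using e tree_irrefl[OF t] by metis
  ultimately have "2 \<le> j" by simp
  moreover have "is_path V E (take (Suc j) r)" using is_path_take[OF p] by simp
  moreover have "last (take (Suc j) r) = r ! j" using j by (subst last_conv_nth) auto
  moreover have "hd (take (Suc j) r) = r ! 0" using j by (subst hd_conv_nth) auto
  moreover have "length (take (Suc j) r) \<ge> 3" using \<open>2 \<le> j\<close> j by simp
  ultimately show False
    using t e tree_sym[OF t] unfolding is_tree_def by metis
qed

lemma tree_path_avoids_other_neighbour:
  assumes t: "is_tree V E" and p: "is_path V E r" and "y \<in> set r" "E (r ! 0) y" "E (r ! 0) w" "w \<noteq> y"
  shows "w \<notin> set r"
  using assms tree_path_neighbour_of_hd[OF t p] by (metis in_set_conv_nth)

lemma path_length_le_card: "is_tree V E \<Longrightarrow> is_path V E ys \<Longrightarrow> length ys \<le> card V"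
  unfolding is_path_def is_tree_def by (metis card_mono distinct_card)

lemma two_le_deg:
  assumes t: "is_tree V E" and "E v u" "E v w" "u \<noteq> w"
  shows "2 \<le> deg V E v"
proof -
  have "{u, w} \<subseteq> {y \<in> V. E v y}" using assms tree_edge_in_V[OF t] by auto
  moreover have "finite {y \<in> V. E v y}" using t unfolding is_tree_def by simp
  ultimately show ?thesis unfolding deg_def using \<open>u \<noteq> w\<close> by (metis card_2_iff card_mono)
qed

lemma deg_eq_2_iff:
  assumes t: "is_tree V E" and "E v u" "E v w" "u \<noteq> w"
  shows "deg V E v = 2 \<longleftrightarrow> (\<forall>y. E v y \<longrightarrow> y = u \<or> y = w)"
proof
  assume "deg V E v = 2"
  show "\<forall>y. E v y \<longrightarrow> y = u \<or> y = w"
  proof (rule ccontr)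
    assume "\<not> (\<forall>y. E v y \<longrightarrow> y = u \<or> y = w)"
    then obtain y where y: "E v y" "y \<noteq> u" "y \<noteq> w" by blast
    have "{u, w, y} \<subseteq> {y \<in> V. E v y}" using assms y tree_edge_in_V[OF t] by auto
    moreover have "finite {y \<in> V. E v y}" using t unfolding is_tree_def by simp
    ultimately have "card {u, w, y} \<le> deg V E v" unfolding deg_def by (rule card_mono[rotated])
    with \<open>deg V E v = 2\<close> \<open>u \<noteq> w\<close> y show False by simp
  qed
next
  assume "\<forall>y. E v y \<longrightarrow> y = u \<or> y = w"
  then have "{y \<in> V. E v y} = {u, w}" using assms tree_edge_in_V[OF t] by auto
  then show "deg V E v = 2" unfolding deg_def using \<open>u \<noteq> w\<close> by simp
qed

lemma is_path_Cons:
  "ys \<noteq> [] \<Longrightarrow> is_path V E (z # ys) \<longleftrightarrow> z \<in> V \<and> z \<notin> set ys \<and> E z (hd ys) \<and> is_path V E ys"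
  unfolding is_path_def by (auto simp: hd_conv_nth nth_Cons split: nat.splits)

lemma ball_set_butlast_tl_iff:
  "(\<forall>x\<in>set (butlast (tl ys)). P x) \<longleftrightarrow> (\<forall>i. 0 < i \<and> i < length ys - 1 \<longrightarrow> P (ys ! i))"
proof -
  have nth: "butlast (tl ys) ! j = ys ! Suc j" if "j < length ys - 2" for j
    using that by (simp add: nth_butlast nth_tl)
  show ?thesis
  proof (intro iffI allI impI ballI)
    fix i assume "\<forall>x\<in>set (butlast (tl ys)). P x" and i: "0 < i \<and> i < length ys - 1"
    moreover have "i - 1 < length ys - 2" using i by linarith
    moreover have "ys ! i = butlast (tl ys) ! (i - 1)" using i nth[of "i - 1"] calculation by simp
    ultimately show "P (ys ! i)" by (metis length_butlast length_tl diff_diff_left nth_mem one_add_one)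
  next
    fix x assume H: "\<forall>i. 0 < i \<and> i < length ys - 1 \<longrightarrow> P (ys ! i)" and "x \<in> set (butlast (tl ys))"
    then obtain j where "j < length ys - 2" "x = butlast (tl ys) ! j"
      by (auto simp: in_set_conv_nth numeral_2_eq_2)
    then show "P x" using H[rule_format, of "Suc j"] nth by simp
  qed
qed

lemma set_butlast_tl_rev: "set (butlast (tl (rev xs))) = set (butlast (tl xs))"
proof -
  have "tl (rev xs) = rev (butlast xs)" by (metis butlast_rev rev_rev_ident)
  then show ?thesis by (simp add: butlast_tl)
qed

lemma two_path_iff:
  "two_path V E ys a \<longleftrightarrow> is_path V E ys \<and> length ys = a + 1 \<and> 1 \<le> a \<and>
     deg V E (hd ys) \<noteq> 2 \<and> deg V E (last ys) \<noteq> 2 \<and> (\<forall>x\<in>set (butlast (tl ys)). deg V E x = 2)"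
  unfolding two_path_def ball_set_butlast_tl_iff
  by (cases ys) (auto simp: hd_conv_nth last_conv_nth)

lemma is_path_Cons_of_deg_2:
  assumes t: "is_tree V E" and p: "is_path V E ys" and l: "2 \<le> length ys"
    and d: "deg V E (hd ys) = 2"
  shows "\<exists>z. is_path V E (z # ys)"
proof -
  have hd: "hd ys = ys ! 0" using l by (cases ys) auto
  have e01: "E (ys ! 0) (ys ! 1)" using p l unfolding is_path_def by auto
  obtain a b where ab: "{y \<in> V. E (ys ! 0) y} = {a, b}" "a \<noteq> b"
    using d hd unfolding deg_def by (auto simp: card_2_iff)
  have "ys ! 1 \<in> {a, b}" using ab(1) e01 tree_edge_in_V[OF t] by blast
  then obtain z where "z \<in> {a, b}" "z \<noteq> ys ! 1" using ab(2) by blast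
  then have z: "E (ys ! 0) z" "z \<noteq> ys ! 1" using ab(1) by blast+
  have "z \<notin> set ys"
    using tree_path_avoids_other_neighbour[OF t p _ e01 z] l by simp
  moreover have "ys \<noteq> []" using l by auto
  moreover have "E z (hd ys)" "z \<in> V" using z(1) hd tree_sym[OF t] tree_edge_in_V[OF t] by auto
  ultimately have "is_path V E (z # ys)" using is_path_Cons p by blast
  then show ?thesis ..
qed

lemma degree_2_path_extends_left:
  assumes t: "is_tree V E"
  shows "is_path V E ys \<Longrightarrow> 2 \<le> length ys \<Longrightarrow> \<forall>x\<in>set (butlast (tl ys)). deg V E x = 2 \<Longrightarrow>
    \<exists>ws. is_path V E (ws @ ys) \<and> deg V E (hd (ws @ ys)) \<noteq> 2 \<and>
      (\<forall>x\<in>set (butlast (tl (ws @ ys))). deg V E x = 2)"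
proof (induction "card V - length ys" arbitrary: ys rule: less_induct)
  case less
  show ?case
  proof (cases "deg V E (hd ys) = 2")
    case False
    then show ?thesis using less.prems by (metis append_Nil)
  next
    case True
    then obtain z where pz: "is_path V E (z # ys)"
      using is_path_Cons_of_deg_2[OF t] less.prems by blast
    have shorter: "card V - length (z # ys) < card V - length ys"
      using path_length_le_card[OF t pz] by simp
    obtain y r where ys: "ys = y # r" "r \<noteq> []" using less.prems(2) by (cases ys) fastforce+
    have "\<forall>x\<in>set (butlast (tl (z # ys))). deg V E x = 2"
      using True less.prems(3) ys by simp
    then obtain ws where "is_path V E (ws @ z # ys)" "deg V E (hd (ws @ z # ys)) \<noteq> 2"
        "\<forall>x\<in>set (butlast (tl (ws @ z # ys))). deg V E x = 2"
      using less.hyps[OF shorter pz] less.prems(2) by auto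
    then show ?thesis by (intro exI[of _ "ws @ [z]"]) simp
  qed
qed

lemma degree_2_path_in_two_path:
  assumes t: "is_tree V E" and p: "is_path V E ys" and l: "2 \<le> length ys"
    and inner: "\<forall>x\<in>set (butlast (tl ys)). deg V E x = 2"
  shows "\<exists>zs a. two_path V E zs a \<and> length ys \<le> a + 1"
proof -
  obtain ws where ws: "is_path V E (ws @ ys)" "deg V E (hd (ws @ ys)) \<noteq> 2"
      "\<forall>x\<in>set (butlast (tl (ws @ ys))). deg V E x = 2"
    using degree_2_path_extends_left[OF t p l inner] by blast
  define zs where "zs = rev (ws @ ys)"
  have "is_path V E zs" using is_path_rev[OF tree_symp[OF t] ws(1)] unfolding zs_def .
  moreover have "2 \<le> length zs" using l unfolding zs_def by simp
  moreover have "\<forall>x\<in>set (butlast (tl zs)). deg V E x = 2"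
    using ws(3) unfolding zs_def set_butlast_tl_rev .
  ultimately obtain us where us: "is_path V E (us @ zs)" "deg V E (hd (us @ zs)) \<noteq> 2"
      "\<forall>x\<in>set (butlast (tl (us @ zs))). deg V E x = 2"
    using degree_2_path_extends_left[OF t] by blast
  have "hd (rev (us @ zs)) = hd (ws @ ys)" using l by (cases ws) (auto simp: zs_def hd_rev last_rev hd_append)
  moreover have "last (rev (us @ zs)) = hd (us @ zs)" by (rule last_rev)
  moreover have "2 \<le> length (us @ zs)" using \<open>2 \<le> length zs\<close> by simp
  ultimately have "two_path V E (rev (us @ zs)) (length (us @ zs) - 1)"
    unfolding two_path_iff set_butlast_tl_rev
    using is_path_rev[OF tree_symp[OF t] us(1)] us(2,3) ws(2) by auto
  moreover have "length ys \<le> length (us @ zs) - 1 + 1" unfolding zs_def by simp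
  ultimately show ?thesis by blast
qed

section \<open>Side rays\<close>

definition side_rays_within :: "nat set \<Rightarrow> (nat \<Rightarrow> nat \<Rightarrow> bool) \<Rightarrow> nat \<Rightarrow> nat \<Rightarrow> nat \<Rightarrow> nat \<Rightarrow> bool" where
  "side_rays_within V E u v w e \<longleftrightarrow> (\<forall>y. E v y \<and> y \<noteq> u \<and> y \<noteq> w \<longrightarrow>
     (\<exists>r a. ray V E r a \<and> a \<le> e \<and> r ! 0 = v \<and> y \<in> set r))"

text \<open>If no bound e works, LEAST returns the junk value 0; every lemma about the order therefore
  assumes \<^term>\<open>side_rays_within V E u v w d\<close> for some d.\<close>
definition side_ray_order :: "nat set \<Rightarrow> (nat \<Rightarrow> nat \<Rightarrow> bool) \<Rightarrow> nat \<Rightarrow> nat \<Rightarrow> nat \<Rightarrow> nat" where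
  "side_ray_order V E u v w = (LEAST e. side_rays_within V E u v w e)"

lemma side_rays_within_mono:
  "side_rays_within V E u v w e \<Longrightarrow> e \<le> e' \<Longrightarrow> side_rays_within V E u v w e'"
  unfolding side_rays_within_def by (meson le_trans)

lemma side_rays_within_0_iff:
  assumes "is_tree V E" "E v u" "E v w" "u \<noteq> w"
  shows "side_rays_within V E u v w 0 \<longleftrightarrow> deg V E v = 2"
  unfolding deg_eq_2_iff[OF assms] side_rays_within_def ray_def two_path_def by auto

lemma side_ray_order_le_iff:
  "side_rays_within V E u v w d \<Longrightarrow> side_ray_order V E u v w \<le> e \<longleftrightarrow> side_rays_within V E u v w e"
  unfolding side_ray_order_def by (metis LeastI Least_le side_rays_within_mono)

lemma side_ray_order_le: "side_rays_within V E u v w d \<Longrightarrow> side_ray_order V E u v w \<le> d"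
  using side_ray_order_le_iff by blast

lemma ray_of_side_ray_order:
  assumes t: "is_tree V E" and nbrs: "E v u" "E v w" "u \<noteq> w"
    and d: "side_rays_within V E u v w d" and pos: "0 < side_ray_order V E u v w"
  shows "\<exists>r. ray V E r (side_ray_order V E u v w) \<and> r ! 0 = v \<and> u \<notin> set r \<and> w \<notin> set r"
proof -
  define e where "e = side_ray_order V E u v w"
  have "\<not> side_rays_within V E u v w (e - 1)"
    using side_ray_order_le_iff[OF d] pos unfolding e_def by (metis diff_less less_numeral_extra(1) not_le)
  then obtain y where y: "E v y" "y \<noteq> u" "y \<noteq> w"
    and short: "\<And>r a. ray V E r a \<Longrightarrow> r ! 0 = v \<Longrightarrow> y \<in> set r \<Longrightarrow> e - 1 < a"
    unfolding side_rays_within_def by (meson not_le)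
  have "side_rays_within V E u v w e" using side_ray_order_le_iff[OF d, of e] unfolding e_def by simp
  then obtain r a where r: "ray V E r a" "a \<le> e" "r ! 0 = v" "y \<in> set r"
    using y unfolding side_rays_within_def by blast
  have "a = e" using short[OF r(1,3,4)] r(2) by simp
  moreover have "is_path V E r" using r(1) unfolding ray_def two_path_def by blast
  then have "u \<notin> set r" "w \<notin> set r"
    using tree_path_avoids_other_neighbour[OF t _ r(4)] r(3) y nbrs by auto
  ultimately show ?thesis using r unfolding e_def by blast
qed

lemma C_gadget_iff:
  assumes t: "is_tree V E"
  shows "C_gadget V E e L xs \<longleftrightarrow> is_path V E xs \<and> length xs = L + 1 \<and>
    (\<forall>i. 0 < i \<and> i < L \<longrightarrow> side_rays_within V E (xs ! (i - 1)) (xs ! i) (xs ! (i + 1)) e)"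
proof -
  have "deg V E (xs ! i) = 2 \<or> (2 < deg V E (xs ! i) \<and> side_rays_within V E (xs ! (i - 1)) (xs ! i) (xs ! (i + 1)) e)
      \<longleftrightarrow> side_rays_within V E (xs ! (i - 1)) (xs ! i) (xs ! (i + 1)) e"
    if "is_path V E xs" "length xs = L + 1" "0 < i" "i < L" for i
  proof -
    have nbrs: "E (xs ! i) (xs ! (i - 1))" "E (xs ! i) (xs ! (i + 1))" "xs ! (i - 1) \<noteq> xs ! (i + 1)"
      using path_neighbours[OF t that(1)] that(2-4) by auto
    show ?thesis
      using side_rays_within_0_iff[OF t nbrs] two_le_deg[OF t nbrs] side_rays_within_mono[of V E _ _ _ 0 e]
      by (metis le_neq_implies_less zero_le)
  qed
  then show ?thesis unfolding C_gadget_def side_rays_within_def[symmetric] by auto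
qed

section \<open>A pigeonhole lemma for sequences\<close>

fun window_bound :: "nat \<Rightarrow> nat \<Rightarrow> nat \<Rightarrow> nat" where
  "window_bound k d 0 = d"
| "window_bound k d (Suc e) = (k + 2) * (window_bound k d e + 2 * Suc e + 1)"

text \<open>J 0 and J (k + 1) play the roles of the ends i_0 and i_(k+1) of a strong C-gadget,
  J 1, ..., J k those of its junctions.\<close>
definition junction_sequence :: "(nat \<Rightarrow> nat) \<Rightarrow> nat \<Rightarrow> nat \<Rightarrow> (nat \<Rightarrow> nat) \<Rightarrow> bool" where
  "junction_sequence g k e J \<longleftrightarrow> (\<forall>j\<le>k. J j + 2 * e < J (Suc j)) \<and>
     (\<forall>j\<in>{1..k}. g (J j) = e) \<and> (\<forall>i\<in>{J 0<..<J (k + 1)}. g i \<le> e)"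

lemma junction_sequence_less:
  assumes "junction_sequence g k e J" "i < j" "j \<le> k + 1"
  shows "J i < J j"
  using assms(2,3)
proof (induction j)
  case (Suc j)
  have "J j < J (Suc j)" using assms(1) Suc.prems(2) unfolding junction_sequence_def by fastforce
  then show ?case using Suc less_Suc_eq by fastforce
qed simp

lemma junction_sequence_exists:
  assumes "\<forall>i\<in>{s..<s + window_bound k d e}. g i \<le> e"
    and "\<forall>s'. s \<le> s' \<and> s' + d \<le> s + window_bound k d e \<longrightarrow> (\<exists>i\<in>{s'..<s' + d}. g i \<noteq> 0)"
  shows "\<exists>e' J. 1 \<le> e' \<and> e' \<le> e \<and> s \<le> J 0 \<and> J (k + 1) < s + window_bound k d e \<and>
    junction_sequence g k e' J"
  using assms
proof (induction e arbitrary: s)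
  case 0
  then show ?case by fastforce
next
  case (Suc e)
  txt \<open>Cut the window into k + 2 blocks of length c. Either some block starts with a subwindow
    where all values are at most e, or every block contains a value e + 1, and consecutive such
    values are more than 2(e + 1) apart.\<close>
  define c where "c = window_bound k d e + 2 * Suc e + 1"
  have block: "j * c + window_bound k d e \<le> window_bound k d (Suc e)" if "j < k + 2" for j
  proof -
    have "j * c \<le> (k + 1) * c" using that by (intro mult_le_mono1) simp
    then show ?thesis unfolding c_def by simp
  qed
  show ?case
  proof (cases "\<exists>j<k + 2. \<forall>i\<in>{s + j * c..<s + j * c + window_bound k d e}. g i \<le> e")
    case True
    then obtain j where j: "j < k + 2" "\<forall>i\<in>{s + j * c..<s + j * c + window_bound k d e}. g i \<le> e"
      by blast
    obtain e' J where "1 \<le> e'" "e' \<le> e" "s + j * c \<le> J 0"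
        "J (k + 1) < s + j * c + window_bound k d e" "junction_sequence g k e' J"
      using Suc.IH[of "s + j * c"] j(2) Suc.prems(2) block[OF j(1)] by fastforce
    then show ?thesis using block[OF j(1)] by (intro exI[of _ e'] exI[of _ J]) auto
  next
    case False
    then obtain P where P: "\<And>j. j < k + 2 \<Longrightarrow> s + j * c \<le> P j \<and> P j < s + j * c + window_bound k d e \<and> e < g (P j)"
      by (metis atLeastLessThan_iff not_le)
    have in_window: "s \<le> P j \<and> P j < s + window_bound k d (Suc e)" if "j < k + 2" for j
      using P[OF that] block[OF that] by fastforce
    have junction: "g (P j) = Suc e" if "j < k + 2" for j
    proof -
      have "g (P j) \<le> Suc e" using in_window[OF that] Suc.prems(1) by simp
      then show ?thesis using P[OF that] by simp
    qed
    have "junction_sequence g k (Suc e) P"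
      unfolding junction_sequence_def
    proof (intro conjI allI impI ballI)
      fix j assume "j \<le> k"
      then show "P j + 2 * Suc e < P (Suc j)" using P[of j] P[of "Suc j"] unfolding c_def by simp
    next
      fix j assume "j \<in> {1..k}"
      then show "g (P j) = Suc e" using junction by simp
    next
      fix i assume "i \<in> {P 0<..<P (k + 1)}"
      then show "g i \<le> Suc e" using in_window[of 0] in_window[of "k + 1"] Suc.prems(1) by fastforce
    qed
    then show ?thesis using in_window[of 0] in_window[of "k + 1"] by fastforce
  qed
qed

section \<open>Strong C-gadgets inside C-gadgets\<close>

lemma side_ray_order_nonzero_in_window:
  assumes t: "is_tree V E" and longest: "longest_two_path V E d" and G: "C_gadget V E d L xs"
    and s: "1 \<le> s" "s + d \<le> L"
  shows "\<exists>i\<in>{s..<s + d}. side_ray_order V E (xs ! (i - 1)) (xs ! i) (xs ! (i + 1)) \<noteq> 0"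
proof (rule ccontr)
  assume "\<not> ?thesis"
  then have zero: "side_ray_order V E (xs ! (i - 1)) (xs ! i) (xs ! (i + 1)) = 0"
    if "s \<le> i" "i < s + d" for i
    using that by auto
  have px: "is_path V E xs" and lx: "length xs = L + 1"
    and within: "\<And>i. 0 < i \<Longrightarrow> i < L \<Longrightarrow> side_rays_within V E (xs ! (i - 1)) (xs ! i) (xs ! (i + 1)) d"
    using G unfolding C_gadget_iff[OF t] by auto
  define ys where "ys = take (d + 2) (drop (s - 1) xs)"
  have ly: "length ys = d + 2" unfolding ys_def using lx s by simp
  have py: "is_path V E ys" unfolding ys_def
    using lx s by (intro is_path_take is_path_drop px) auto
  have "deg V E (ys ! i) = 2" if i: "0 < i" "i < length ys - 1" for i
  proof -
    define p where "p = s - 1 + i"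
    have p: "s \<le> p" "p < s + d" "0 < p" "p < L" using i s ly unfolding p_def by auto
    have "ys ! i = xs ! p" unfolding ys_def p_def using i ly lx s by simp
    moreover have "side_rays_within V E (xs ! (p - 1)) (xs ! p) (xs ! (p + 1)) 0"
      using side_ray_order_le_iff[OF within[OF p(3,4)]] zero[OF p(1,2)] by simp
    moreover have "E (xs ! p) (xs ! (p - 1))" "E (xs ! p) (xs ! (p + 1))" "xs ! (p - 1) \<noteq> xs ! (p + 1)"
      using path_neighbours[OF t px] p lx by auto
    ultimately show ?thesis using side_rays_within_0_iff[OF t] by simp
  qed
  then obtain zs a where "two_path V E zs a" "length ys \<le> a + 1"
    using degree_2_path_in_two_path[OF t py] ly unfolding ball_set_butlast_tl_iff by fastforce
  then show False using longest ly unfolding longest_two_path_def by fastforce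
qed

lemma strong_C_gadget_of_junction_sequence:
  assumes t: "is_tree V E" and G: "C_gadget V E d L xs" and e: "1 \<le> e" and end_le: "J (k + 1) \<le> L"
    and J: "junction_sequence (\<lambda>i. side_ray_order V E (xs ! (i - 1)) (xs ! i) (xs ! (i + 1))) k e J"
  shows "strong_C_gadget V E e k (drop (J 0) (take (J (k + 1) + 1) xs))"
proof -
  define a b where "a = J 0" and "b = J (k + 1)"
  define ys where "ys = drop a (take (b + 1) xs)"
  have px: "is_path V E xs" and lx: "length xs = L + 1"
    and within: "\<And>i. 0 < i \<Longrightarrow> i < L \<Longrightarrow> side_rays_within V E (xs ! (i - 1)) (xs ! i) (xs ! (i + 1)) d"
    using G unfolding C_gadget_iff[OF t] by auto
  have nbrs: "E (xs ! i) (xs ! (i - 1))" "E (xs ! i) (xs ! (i + 1))" "xs ! (i - 1) \<noteq> xs ! (i + 1)"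
    if "0 < i" "i < L" for i
    using path_neighbours[OF t px] that lx by auto
  have ab: "a < b" "b \<le> L" using junction_sequence_less[OF J, of 0 "k + 1"] end_le unfolding a_def b_def by auto
  have ly: "length ys = b - a + 1" unfolding ys_def using lx ab by simp
  have yn: "ys ! i = xs ! (a + i)" if "i \<le> b - a" for i
    unfolding ys_def using that lx ab by simp
  have py: "is_path V E ys" unfolding ys_def
    using lx ab by (intro is_path_take is_path_drop px) auto
  have gadget: "C_gadget V E e (b - a) ys"
    unfolding C_gadget_iff[OF t]
  proof (intro conjI allI impI py ly)
    fix i assume i: "0 < i \<and> i < b - a"
    define p where "p = a + i"
    have p: "0 < p" "p < L" "a < p" "p < b" using i ab unfolding p_def by auto
    have "side_ray_order V E (xs ! (p - 1)) (xs ! p) (xs ! (p + 1)) \<le> e"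
      using J p(3,4) unfolding junction_sequence_def a_def b_def by auto
    then have "side_rays_within V E (xs ! (p - 1)) (xs ! p) (xs ! (p + 1)) e"
      using side_ray_order_le_iff[OF within[OF p(1,2)]] by blast
    moreover have "ys ! i = xs ! p" "ys ! (i - 1) = xs ! (p - 1)" "ys ! (i + 1) = xs ! (p + 1)"
      using yn i unfolding p_def by auto
    ultimately show "side_rays_within V E (ys ! (i - 1)) (ys ! i) (ys ! (i + 1)) e" by simp
  qed
  have gaps: "J j - a + 2 * e < J (Suc j) - a" if "j \<le> k" for j
  proof -
    have "a \<le> J j"
      using junction_sequence_less[OF J, of 0 j] that unfolding a_def by (cases "j = 0") auto
    then show ?thesis using J that unfolding junction_sequence_def by auto
  qed
  have rays: "\<exists>r. ray V E r e \<and> r ! 0 = ys ! (J j - a) \<and>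
      ys ! (J j - a - 1) \<notin> set r \<and> ys ! (J j - a + 1) \<notin> set r" if j: "1 \<le> j" "j \<le> k" for j
  proof -
    have Jj: "a < J j" "J j < b" "side_ray_order V E (xs ! (J j - 1)) (xs ! J j) (xs ! (J j + 1)) = e"
      using junction_sequence_less[OF J, of 0 j] junction_sequence_less[OF J, of j "k + 1"] J j
      unfolding a_def b_def junction_sequence_def by auto
    have inner: "0 < J j" "J j < L" using Jj ab by auto
    obtain r where "ray V E r e" "r ! 0 = xs ! J j" "xs ! (J j - 1) \<notin> set r" "xs ! (J j + 1) \<notin> set r"
      using ray_of_side_ray_order[OF t nbrs[OF inner] within[OF inner]] Jj(3) e by auto
    moreover have "ys ! (J j - a) = xs ! J j" "ys ! (J j - a - 1) = xs ! (J j - 1)"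
      "ys ! (J j - a + 1) = xs ! (J j + 1)"
      using yn Jj by auto
    ultimately show ?thesis by auto
  qed
  have "strong_C_gadget V E e k ys"
    unfolding strong_C_gadget_def
    by (intro exI[of _ "b - a"] conjI gadget exI[of _ "\<lambda>j. J j - a"])
      (use gaps rays in \<open>auto simp: a_def b_def\<close>)
  then show ?thesis unfolding ys_def a_def b_def .
qed

theorem lemma34:
  fixes k d :: nat
  assumes "d \<ge> 1" and "k \<ge> 1"
  shows "\<exists>L > 0. \<forall>V E. is_tree V E \<and> longest_two_path V E d \<and> (\<exists>xs. C_gadget V E d L xs) \<longrightarrow>
           (\<exists>d'. 1 \<le> d' \<and> d' \<le> d \<and> (\<exists>k' \<ge> k. \<exists>ys. strong_C_gadget V E d' k' ys))"
proof (rule exI[of _ "window_bound k d d + 1"], intro conjI allI impI)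
  show "0 < window_bound k d d + 1" by simp
  fix V E
  assume "is_tree V E \<and> longest_two_path V E d \<and> (\<exists>xs. C_gadget V E d (window_bound k d d + 1) xs)"
  then obtain xs where t: "is_tree V E" and longest: "longest_two_path V E d"
    and G: "C_gadget V E d (window_bound k d d + 1) xs"
    by blast
  define g where "g = (\<lambda>i. side_ray_order V E (xs ! (i - 1)) (xs ! i) (xs ! (i + 1)))"
  have "\<forall>i\<in>{1..<1 + window_bound k d d}. g i \<le> d"
    using G unfolding C_gadget_iff[OF t] g_def by (auto intro: side_ray_order_le)
  moreover have "\<forall>s. 1 \<le> s \<and> s + d \<le> 1 + window_bound k d d \<longrightarrow> (\<exists>i\<in>{s..<s + d}. g i \<noteq> 0)"
    using side_ray_order_nonzero_in_window[OF t longest G] unfolding g_def by simp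
  ultimately obtain e J where "1 \<le> e" "e \<le> d" "J (k + 1) < 1 + window_bound k d d"
    "junction_sequence g k e J"
    using junction_sequence_exists[of 1 k d d g] by blast
  then have "strong_C_gadget V E e k (drop (J 0) (take (J (k + 1) + 1) xs))"
    using strong_C_gadget_of_junction_sequence[OF t G] unfolding g_def by simp
  then show "\<exists>d'. 1 \<le> d' \<and> d' \<le> d \<and> (\<exists>k' \<ge> k. \<exists>ys. strong_C_gadget V E d' k' ys)"
    using \<open>1 \<le> e\<close> \<open>e \<le> d\<close> by blast
qed

end
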